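(* In the $\ell^2$ linear social choice setting, random dictatorship has worst-case distortion $\Omega(d)$.
   Context: Setting ($\ell^2$ linear social choice). Fix a dimension $d$. An instance consists of $n$ voters and $m$ candidates, each a vector in $\mathbb{R}^d_{\ge 0}$ with Euclidean norm $1$, with every voter vector in $\mathrm{Cone}(C)$ (nonnegative linear combinations of the candidate vectors $C$). Utility $u_v(c)=v^\top c$; each voter reports a ranking of $C$ consistent with its utilities (ties broken arbitrarily). $\mathrm{UW}(c)=\sum_v u_v(c)$. Distortion of a randomized rule on an instance: $\max_c\mathrm{UW}(c)/\mathbb{E}_{c\sim f}[\mathrm{UW}(c)]$; worst-case distortion is the supremum over instances, as a function of $d$. Random dictatorship: pick a voter uniformly at random and output its top-ranked candidate. *)

theory Defs
  imports Complex_Main "HOL-Library.Extended_Real"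
begin

text \<open>Vectors of R^d are represented as functions nat => real vanishing at indices >= d
  (the dimension d varies inside the statement, so it cannot be a type).\<close>

definition in_dim :: "nat \<Rightarrow> (nat \<Rightarrow> real) \<Rightarrow> bool" where
  "in_dim d x \<longleftrightarrow> (\<forall>i\<ge>d. x i = 0)"

definition ip :: "nat \<Rightarrow> (nat \<Rightarrow> real) \<Rightarrow> (nat \<Rightarrow> real) \<Rightarrow> real" where
  "ip d x y = (\<Sum>i<d. x i * y i)"

definition unit_nonneg :: "nat \<Rightarrow> (nat \<Rightarrow> real) \<Rightarrow> bool" where
  "unit_nonneg d x \<longleftrightarrow> in_dim d x \<and> (\<forall>i<d. 0 \<le> x i) \<and> sqrt (ip d x x) = 1"

definition in_cone :: "nat \<Rightarrow> (nat \<Rightarrow> real) set \<Rightarrow> (nat \<Rightarrow> real) \<Rightarrow> bool" where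
  "in_cone d C v \<longleftrightarrow> (\<exists>lam. (\<forall>c\<in>C. 0 \<le> lam c) \<and> (\<forall>i<d. v i = (\<Sum>c\<in>C. lam c * c i)))"

text \<open>An instance: n voters V 0, ..., V (n-1) (with multiplicity), a finite nonempty set C of
  candidates, and for each voter the top-ranked candidate of its reported ranking
  (any utility-maximizing candidate, since ties are broken arbitrarily).\<close>
definition valid_instance ::
  "nat \<Rightarrow> nat \<Rightarrow> (nat \<Rightarrow> nat \<Rightarrow> real) \<Rightarrow> (nat \<Rightarrow> real) set \<Rightarrow> (nat \<Rightarrow> (nat \<Rightarrow> real)) \<Rightarrow> bool" where
  "valid_instance d n V C tp \<longleftrightarrow>
     0 < n \<and> finite C \<and> C \<noteq> {} \<and>
     (\<forall>c\<in>C. unit_nonneg d c) \<and>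
     (\<forall>i<n. unit_nonneg d (V i) \<and> in_cone d C (V i)) \<and>
     (\<forall>i<n. tp i \<in> C \<and> (\<forall>c\<in>C. ip d (V i) c \<le> ip d (V i) (tp i)))"

definition UW :: "nat \<Rightarrow> nat \<Rightarrow> (nat \<Rightarrow> nat \<Rightarrow> real) \<Rightarrow> (nat \<Rightarrow> real) \<Rightarrow> real" where
  "UW d n V c = (\<Sum>i<n. ip d (V i) c)"

definition rd_distortion ::
  "nat \<Rightarrow> nat \<Rightarrow> (nat \<Rightarrow> nat \<Rightarrow> real) \<Rightarrow> (nat \<Rightarrow> real) set \<Rightarrow> (nat \<Rightarrow> (nat \<Rightarrow> real)) \<Rightarrow> real" where
  "rd_distortion d n V C tp =
     (MAX c\<in>C. UW d n V c) / ((\<Sum>i<n. UW d n V (tp i)) / real n)"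

definition rd_worst_distortion :: "nat \<Rightarrow> ereal" where
  "rd_worst_distortion d =
     (SUP (n, V, C, tp) \<in> {(n, V, C, tp). valid_instance d n V C tp}.
        ereal (rd_distortion d n V C tp))"

end

theory Submission
  imports Defs
begin

text \<open>Take the standard basis vectors e_0, ..., e_(d-1) as candidates and, for
  k = 1, ..., d - 1, a voter (3/5) e_0 + (4/5) e_k. Every voter strictly prefers its
  private candidate e_k, whose welfare is only 4/5, while the shared candidate e_0
  collects 3/5 from each of the d - 1 voters. Hence random dictatorship has distortion at
  least 3(d - 1)/4 in dimension d. The 3-4-5 weights give unit voters with rational entries
  and no ties, so the bound does not depend on tie-breaking.\<close>

definition basis_vec :: "nat \<Rightarrow> nat \<Rightarrow> real" where
  "basis_vec k = (\<lambda>i. if i = k then 1 else 0)"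

definition voter :: "nat \<Rightarrow> nat \<Rightarrow> real" where
  "voter k = (\<lambda>i. if i = 0 then 3/5 else if i = k then 4/5 else 0)"

lemma inj_basis_vec: "inj basis_vec"
  unfolding inj_def basis_vec_def by (metis zero_neq_one)

lemma ip_basis_vec: "k < d \<Longrightarrow> ip d x (basis_vec k) = x k"
  unfolding ip_def basis_vec_def by (simp add: if_distrib cong: if_cong)

lemma ip_commute: "ip d x y = ip d y x"
  unfolding ip_def by (simp add: mult.commute)

lemma unit_nonneg_basis_vec: "k < d \<Longrightarrow> unit_nonneg d (basis_vec k)"
  unfolding unit_nonneg_def in_dim_def by (auto simp: ip_basis_vec) (auto simp: basis_vec_def)

lemma in_cone_basis_vec:
  assumes "\<forall>i<d. 0 \<le> v i"
  shows "in_cone d (basis_vec ` {..<d}) v"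
  unfolding in_cone_def
proof (intro exI[of _ "\<lambda>c. ip d c v"] conjI ballI allI impI)
  fix c assume "c \<in> basis_vec ` {..<d}"
  then show "0 \<le> ip d c v" using assms by (auto simp: ip_commute ip_basis_vec)
next
  fix i assume "i < d"
  have "(\<Sum>c\<in>basis_vec ` {..<d}. ip d c v * c i) = (\<Sum>k<d. v k * basis_vec k i)"
    by (simp add: sum.reindex inj_on_subset[OF inj_basis_vec] ip_commute ip_basis_vec)
  also have "\<dots> = v i"
    using \<open>i < d\<close> by (simp add: basis_vec_def if_distrib cong: if_cong)
  finally show "v i = (\<Sum>c\<in>basis_vec ` {..<d}. ip d c v * c i)" by simp
qed

lemma ip_voter_self: "0 < k \<Longrightarrow> k < d \<Longrightarrow> ip d (voter k) (voter k) = 1"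
proof -
  assume k: "0 < k" "k < d"
  have "ip d (voter k) (voter k) = (\<Sum>i\<in>{0, k}. voter k i * voter k i)"
    unfolding ip_def using k by (intro sum.mono_neutral_right) (auto simp: voter_def)
  then show ?thesis using k by (simp add: voter_def)
qed

lemma unit_nonneg_voter: "0 < k \<Longrightarrow> k < d \<Longrightarrow> unit_nonneg d (voter k)"
  unfolding unit_nonneg_def in_dim_def by (auto simp: ip_voter_self) (auto simp: voter_def)

lemma valid_instance_voters:
  assumes "2 \<le> d"
  shows "valid_instance d (d - 1) (\<lambda>i. voter (Suc i)) (basis_vec ` {..<d}) (\<lambda>i. basis_vec (Suc i))"
  unfolding valid_instance_def
proof (intro conjI allI impI ballI)
  show "0 < d - 1" "finite (basis_vec ` {..<d})" "basis_vec ` {..<d} \<noteq> {}"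
    using assms by (auto simp: lessThan_empty_iff)
  show "unit_nonneg d c" if "c \<in> basis_vec ` {..<d}" for c
    using that unit_nonneg_basis_vec by auto
  fix i assume i: "i < d - 1"
  then show "unit_nonneg d (voter (Suc i))" by (simp add: unit_nonneg_voter)
  show "in_cone d (basis_vec ` {..<d}) (voter (Suc i))"
    by (rule in_cone_basis_vec) (simp add: voter_def)
  show "basis_vec (Suc i) \<in> basis_vec ` {..<d}" using i by auto
  fix c assume "c \<in> basis_vec ` {..<d}"
  then obtain k where "k < d" "c = basis_vec k" by auto
  then show "ip d (voter (Suc i)) c \<le> ip d (voter (Suc i)) (basis_vec (Suc i))"
    using i by (simp add: ip_basis_vec voter_def)
qed

lemma UW_shared_candidate:
  "0 < d \<Longrightarrow> UW d n (\<lambda>i. voter (Suc i)) (basis_vec 0) = 3/5 * real n"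
  unfolding UW_def by (simp add: ip_basis_vec voter_def)

lemma UW_private_candidate:
  assumes "Suc j < d" "j < n"
  shows "UW d n (\<lambda>i. voter (Suc i)) (basis_vec (Suc j)) = 4/5"
proof -
  have "UW d n (\<lambda>i. voter (Suc i)) (basis_vec (Suc j)) = (\<Sum>i<n. if i = j then 4/5 else 0)"
    unfolding UW_def using assms by (intro sum.cong) (auto simp: ip_basis_vec voter_def)
  then show ?thesis using assms by simp
qed

lemma rd_distortion_voters:
  assumes "2 \<le> d"
  shows "3/4 * real (d - 1)
    \<le> rd_distortion d (d - 1) (\<lambda>i. voter (Suc i)) (basis_vec ` {..<d}) (\<lambda>i. basis_vec (Suc i))"
proof -
  let ?n = "d - 1" and ?V = "\<lambda>i. voter (Suc i)"
  have "(\<Sum>i<?n. UW d ?n ?V (basis_vec (Suc i))) = (\<Sum>i<?n. 4/5)"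
    by (intro sum.cong) (auto simp: UW_private_candidate)
  then have mean_top: "(\<Sum>i<?n. UW d ?n ?V (basis_vec (Suc i))) / real ?n = 4/5"
    using assms by (simp add: field_simps of_nat_diff)
  have "UW d ?n ?V (basis_vec 0) \<le> (MAX c\<in>basis_vec ` {..<d}. UW d ?n ?V c)"
    using assms by (intro Max_ge) auto
  then have "3/5 * real ?n \<le> (MAX c\<in>basis_vec ` {..<d}. UW d ?n ?V c)"
    using assms by (simp add: UW_shared_candidate)
  then show ?thesis unfolding rd_distortion_def mean_top by simp
qed

lemma rd_distortion_le_worst:
  "valid_instance d n V C tp \<Longrightarrow> ereal (rd_distortion d n V C tp) \<le> rd_worst_distortion d"
  unfolding rd_worst_distortion_def by (rule SUP_upper2[where i = "(n, V, C, tp)"]) auto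

theorem mainTheorem12:
  shows "\<exists>c::real > 0. \<exists>d0::nat. \<forall>d\<ge>d0. ereal (c * real d) \<le> rd_worst_distortion d"
proof (intro exI[of _ "3/8"] conjI exI[of _ 2] allI impI)
  fix d :: nat assume d: "2 \<le> d"
  have "ereal (3/8 * real d) \<le> ereal (3/4 * real (d - 1))" using d by simp
  also have "\<dots> \<le> rd_worst_distortion d"
    using rd_distortion_voters[OF d] rd_distortion_le_worst[OF valid_instance_voters[OF d]]
    by (meson ereal_less_eq(3) order_trans)
  finally show "ereal (3/8 * real d) \<le> rd_worst_distortion d" .
qed simp

end
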